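(* Let $\mathcal{H}$ and $\mathcal{K}$ be finite-dimensional complex Hilbert spaces and let $\Psi,\Xi: B(\mathcal{H})\to B(\mathcal{K})$ be Hermitian-preserving trace-preserving linear maps. Suppose there are finite, pairwise disjoint index sets $K,J,\mathcal{I},L$ with $|K|=|L|=|\mathcal{I}|=|J|$ and linear operators $A_k,B_j,C_i,D_l:\mathcal{H}\to\mathcal{K}$ ($k\in K$, $j\in J$, $i\in\mathcal{I}$, $l\in L$) such that for all $X\in B(\mathcal{H})$ $$\Psi(X)=\sum_{k\in K}A_kXA_k^\dagger-\sum_{j\in J}B_jXB_j^\dagger,\qquad \Xi(X)=\sum_{i\in\mathcal{I}}C_iXC_i^\dagger-\sum_{l\in L}D_lXD_l^\dagger.$$ Then $\Psi=\Xi$ if and only if there exists a unitary matrix $U$ with rows indexed by $K\cup L$ and columns indexed by $\mathcal{I}\cup J$ such that $$A_k=\sum_{i\in\mathcal{I}}U(k,i)C_i+\sum_{j\in J}U(k,j)B_j\ \ (k\in K),\qquad D_l=\sum_{i\in\mathcal{I}}U(l,i)C_i+\sum_{j\in J}U(l,j)B_j\ \ (l\in L).$$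
   Context: $B(\mathcal{H})$ denotes all linear operators on $\mathcal{H}$. A map is Hermitian-preserving if $\Psi(X^\dagger)=\Psi(X)^\dagger$ and trace-preserving if $\operatorname{Tr}\Psi(X)=\operatorname{Tr}X$. *)

theory Defs
  imports "HOL-Analysis.Analysis"
begin

text \<open>Finite-dimensional complex Hilbert spaces H = C^'h, K = C^'k (index types finite).
  Linear operators H -> K are matrices complex^'h^'k (rows indexed by 'k).
  B(H) = complex^'h^'h.\<close>

definition adj :: "complex^'n^'m \<Rightarrow> complex^'m^'n" where
  "adj A = (\<chi> i j. cnj (A $ j $ i))"

definition cscale :: "complex \<Rightarrow> complex^'n^'m \<Rightarrow> complex^'n^'m" where
  "cscale c A = (\<chi> i j. c * A $ i $ j)"

definition complex_linear_map :: "(complex^'h^'h \<Rightarrow> complex^'k^'k) \<Rightarrow> bool" where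
  "complex_linear_map \<Psi> \<longleftrightarrow>
     (\<forall>X Y. \<Psi> (X + Y) = \<Psi> X + \<Psi> Y) \<and> (\<forall>c X. \<Psi> (cscale c X) = cscale c (\<Psi> X))"

definition hermitian_preserving :: "(complex^'h^'h \<Rightarrow> complex^'k^'k) \<Rightarrow> bool" where
  "hermitian_preserving \<Psi> \<longleftrightarrow> (\<forall>X. \<Psi> (adj X) = adj (\<Psi> X))"

definition trace_preserving :: "(complex^'h^'h \<Rightarrow> complex^'k^'k) \<Rightarrow> bool" where
  "trace_preserving \<Psi> \<longleftrightarrow> (\<forall>X. trace (\<Psi> X) = trace X)"

definition unitary_on :: "'a set \<Rightarrow> 'a set \<Rightarrow> ('a \<Rightarrow> 'a \<Rightarrow> complex) \<Rightarrow> bool" where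
  "unitary_on R C U \<longleftrightarrow>
     (\<forall>r\<in>R. \<forall>r'\<in>R. (\<Sum>c\<in>C. U r c * cnj (U r' c)) = (if r = r' then 1 else 0)) \<and>
     (\<forall>c\<in>C. \<forall>c'\<in>C. (\<Sum>r\<in>R. cnj (U r c) * U r c') = (if c = c' then 1 else 0))"

end

theory Submission
  imports Defs
begin

text \<open>Moving the negative terms across, \<open>\<Psi> = \<Xi>\<close> says that the families
  \<open>(A\<^sub>k, D\<^sub>l)\<close> and \<open>(C\<^sub>i, B\<^sub>j)\<close> are Kraus families of one and the same completely positive
  map, so the theorem is the unitary freedom of Kraus representations. Two Kraus families
  give the same map iff, for every pair of matrix positions, the vectors of entries at those
  positions have the same Gram matrices. Equal Gram matrices are matched by a unitary built one
  vector at a time: each new vector is moved into place by a Householder-type unitary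
  \<open>1 - u u\<^sup>\<dagger>/a\<close> with \<open>u\<close> the current error, which fixes everything orthogonal to
  \<open>u\<close> and hence all vectors already matched.\<close>

definition cinner_on :: "'a set \<Rightarrow> ('a \<Rightarrow> complex) \<Rightarrow> ('a \<Rightarrow> complex) \<Rightarrow> complex" where
  "cinner_on S v w = (\<Sum>i\<in>S. v i * cnj (w i))"

definition mat_vec_on :: "'b set \<Rightarrow> ('a \<Rightarrow> 'b \<Rightarrow> complex) \<Rightarrow> ('b \<Rightarrow> complex) \<Rightarrow> 'a \<Rightarrow> complex" where
  "mat_vec_on C U v = (\<lambda>r. \<Sum>c\<in>C. U r c * v c)"

definition mat_mul_on ::
  "'b set \<Rightarrow> ('a \<Rightarrow> 'b \<Rightarrow> complex) \<Rightarrow> ('b \<Rightarrow> 'c \<Rightarrow> complex) \<Rightarrow> 'a \<Rightarrow> 'c \<Rightarrow> complex" where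
  "mat_mul_on S P Q = (\<lambda>r c. \<Sum>s\<in>S. P r s * Q s c)"

lemma cinner_on_cong:
  "(\<And>r. r \<in> S \<Longrightarrow> v r = v' r) \<Longrightarrow> (\<And>r. r \<in> S \<Longrightarrow> w r = w' r) \<Longrightarrow>
    cinner_on S v w = cinner_on S v' w'"
  by (simp add: cinner_on_def)

lemma cinner_on_diff_left: "cinner_on S (\<lambda>r. v r - v' r) w = cinner_on S v w - cinner_on S v' w"
  by (simp add: cinner_on_def sum_subtractf left_diff_distrib)

lemma cinner_on_diff_right: "cinner_on S v (\<lambda>r. w r - w' r) = cinner_on S v w - cinner_on S v w'"
  by (simp add: cinner_on_def sum_subtractf right_diff_distrib)

lemma cnj_cinner_on: "cnj (cinner_on S v w) = cinner_on S w v"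
  by (simp add: cinner_on_def mult.commute)

lemma cinner_on_self_eq_0_iff:
  assumes "finite S"
  shows "cinner_on S v v = 0 \<longleftrightarrow> (\<forall>r\<in>S. v r = 0)"
proof -
  have "cinner_on S v v = of_real (\<Sum>r\<in>S. (cmod (v r))\<^sup>2)"
    by (simp only: cinner_on_def of_real_sum complex_norm_square)
  then have "cinner_on S v v = 0 \<longleftrightarrow> (\<Sum>r\<in>S. (cmod (v r))\<^sup>2) = 0"
    by (simp only: of_real_eq_0_iff)
  also have "\<dots> \<longleftrightarrow> (\<forall>r\<in>S. (cmod (v r))\<^sup>2 = 0)"
    using assms by (intro sum_nonneg_eq_0_iff) auto
  finally show ?thesis by simp
qed

lemma mat_vec_on_mat_mul_on: "mat_vec_on C (mat_mul_on R P Q) v = mat_vec_on R P (mat_vec_on C Q v)"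
  unfolding mat_vec_on_def mat_mul_on_def
  by (rule ext) (simp add: sum_distrib_left sum_distrib_right mult_ac sum.swap[of _ C])

lemma unitary_on_identity:
  assumes "finite R"
  shows "unitary_on R R (\<lambda>r r'. if r = r' then 1 else 0)"
  using assms unfolding unitary_on_def
  by (auto simp: if_distrib[of "\<lambda>t. t * _"] if_distrib[of cnj] cong: if_cong)

lemma unitary_on_exists:
  assumes "finite R" "finite C" "card R = card C"
  shows "\<exists>U. unitary_on R C U"
proof -
  obtain f where f: "bij_betw f C R"
    using finite_same_card_bij[OF assms(2,1) assms(3)[symmetric]] by blast
  define U where "U r c = (if r = f c then 1 else 0 :: complex)" for r c
  have "(\<Sum>c\<in>C. U r c * cnj (U r' c)) = (if r = r' then 1 else 0)" if "r \<in> R" "r' \<in> R" for r r'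
  proof -
    obtain c0 where c0: "c0 \<in> C" "f c0 = r" using bij_betw_imp_surj_on[OF f] \<open>r \<in> R\<close> by blast
    have "(\<Sum>c\<in>C. U r c * cnj (U r' c)) = (\<Sum>c\<in>C. if c = c0 then (if r = r' then 1 else 0) else 0)"
      using f c0 unfolding U_def bij_betw_def inj_on_def by (intro sum.cong) auto
    then show ?thesis using c0 assms by simp
  qed
  moreover have "(\<Sum>r\<in>R. cnj (U r c) * U r c') = (if c = c' then 1 else 0)" if "c \<in> C" "c' \<in> C" for c c'
  proof -
    have "(\<Sum>r\<in>R. cnj (U r c) * U r c') = (\<Sum>r\<in>R. if r = f c then (if c = c' then 1 else 0) else 0)"
      using f that unfolding U_def bij_betw_def inj_on_def by (intro sum.cong) auto
    then show ?thesis using f that assms unfolding bij_betw_def by auto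
  qed
  ultimately show ?thesis unfolding unitary_on_def by blast
qed

lemma unitary_on_cinner_on_mat_vec_on:
  assumes U: "unitary_on R C U" and "finite R" "finite C"
  shows "cinner_on R (mat_vec_on C U v) (mat_vec_on C U w) = cinner_on C v w"
proof -
  have orth: "(\<Sum>r\<in>R. U r c * cnj (U r c')) = (if c = c' then 1 else 0)" if "c \<in> C" "c' \<in> C" for c c'
  proof -
    have "(\<Sum>r\<in>R. U r c * cnj (U r c')) = cnj (\<Sum>r\<in>R. cnj (U r c) * U r c')"
      by (simp add: mult.commute)
    also have "\<dots> = (if c = c' then 1 else 0)" using U that unfolding unitary_on_def by simp
    finally show ?thesis .
  qed
  have "cinner_on R (mat_vec_on C U v) (mat_vec_on C U w) =
      (\<Sum>r\<in>R. \<Sum>c'\<in>C. \<Sum>c\<in>C. v c * cnj (w c') * (U r c * cnj (U r c')))"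
    unfolding cinner_on_def mat_vec_on_def by (simp add: sum_distrib_left sum_distrib_right mult_ac)
  also have "\<dots> = (\<Sum>c'\<in>C. \<Sum>c\<in>C. v c * cnj (w c') * (\<Sum>r\<in>R. U r c * cnj (U r c')))"
    by (simp add: sum_distrib_left sum.swap[of _ R])
  also have "\<dots> = (\<Sum>c'\<in>C. \<Sum>c\<in>C. if c = c' then v c * cnj (w c) else 0)"
    by (intro sum.cong refl) (simp add: orth)
  also have "\<dots> = cinner_on C v w" using assms by (simp add: cinner_on_def)
  finally show ?thesis .
qed

lemma unitary_on_mat_mul_on:
  assumes P: "unitary_on R R P" and Q: "unitary_on R C Q" and fin: "finite R" "finite C"
  shows "unitary_on R C (mat_mul_on R P Q)"
proof -
  have P_rows: "\<And>r r'. r \<in> R \<Longrightarrow> r' \<in> R \<Longrightarrow> (\<Sum>c\<in>R. P r c * cnj (P r' c)) = (if r = r' then 1 else 0)"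
   and P_cols: "\<And>r r'. r \<in> R \<Longrightarrow> r' \<in> R \<Longrightarrow> (\<Sum>c\<in>R. cnj (P c r) * P c r') = (if r = r' then 1 else 0)"
    using P unfolding unitary_on_def by auto
  have Q_rows: "\<And>r r'. r \<in> R \<Longrightarrow> r' \<in> R \<Longrightarrow> (\<Sum>c\<in>C. Q r c * cnj (Q r' c)) = (if r = r' then 1 else 0)"
   and Q_cols: "\<And>c c'. c \<in> C \<Longrightarrow> c' \<in> C \<Longrightarrow> (\<Sum>r\<in>R. cnj (Q r c) * Q r c') = (if c = c' then 1 else 0)"
    using Q unfolding unitary_on_def by auto
  let ?M = "mat_mul_on R P Q"
  have "(\<Sum>c\<in>C. ?M r c * cnj (?M r' c)) = (if r = r' then 1 else 0)" if "r \<in> R" "r' \<in> R" for r r'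
  proof -
    have "(\<Sum>c\<in>C. ?M r c * cnj (?M r' c)) =
        (\<Sum>c\<in>C. \<Sum>t\<in>R. \<Sum>s\<in>R. P r s * cnj (P r' t) * (Q s c * cnj (Q t c)))"
      unfolding mat_mul_on_def by (simp add: sum_distrib_left sum_distrib_right mult_ac)
    also have "\<dots> = (\<Sum>t\<in>R. \<Sum>s\<in>R. P r s * cnj (P r' t) * (\<Sum>c\<in>C. Q s c * cnj (Q t c)))"
      by (simp add: sum_distrib_left sum.swap[of _ C])
    also have "\<dots> = (\<Sum>t\<in>R. \<Sum>s\<in>R. if s = t then P r s * cnj (P r' s) else 0)"
      by (intro sum.cong refl) (simp add: Q_rows)
    also have "\<dots> = (if r = r' then 1 else 0)" using fin P_rows that by simp
    finally show ?thesis .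
  qed
  moreover have "(\<Sum>x\<in>R. cnj (?M x c) * ?M x c') = (if c = c' then 1 else 0)" if "c \<in> C" "c' \<in> C" for c c'
  proof -
    have "(\<Sum>x\<in>R. cnj (?M x c) * ?M x c') =
        (\<Sum>x\<in>R. \<Sum>s\<in>R. \<Sum>t\<in>R. cnj (Q s c) * Q t c' * (cnj (P x s) * P x t))"
      unfolding mat_mul_on_def by (simp add: sum_distrib_left sum_distrib_right mult_ac)
    also have "\<dots> = (\<Sum>s\<in>R. \<Sum>t\<in>R. \<Sum>x\<in>R. cnj (Q s c) * Q t c' * (cnj (P x s) * P x t))"
      by (subst sum.swap) (intro sum.cong refl sum.swap)
    also have "\<dots> = (\<Sum>s\<in>R. \<Sum>t\<in>R. cnj (Q s c) * Q t c' * (\<Sum>x\<in>R. cnj (P x s) * P x t))"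
      by (simp add: sum_distrib_left)
    also have "\<dots> = (\<Sum>s\<in>R. \<Sum>t\<in>R. if s = t then cnj (Q s c) * Q s c' else 0)"
      by (intro sum.cong refl) (simp add: P_cols)
    also have "\<dots> = (if c = c' then 1 else 0)" using fin Q_cols that by simp
    finally show ?thesis .
  qed
  ultimately show ?thesis unfolding unitary_on_def by blast
qed

lemma unitary_on_householder:
  assumes "finite R" and a: "a \<noteq> 0" and u_norm: "cinner_on R u u = a + cnj a"
  shows "unitary_on R R (\<lambda>r r'. (if r = r' then 1 else 0) - u r * cnj (u r') / a)"
    (is "unitary_on R R ?P")
proof -
  have ca: "cnj a \<noteq> 0" using a by simp
  have u_norm': "(\<Sum>c\<in>R. u c * cnj (u c)) = a + cnj a" using u_norm by (simp add: cinner_on_def)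
  have cancel: "(if r = r' then 1 else 0) - cnj (u r') * u r / cnj a - u r * cnj (u r') / a
      + u r * cnj (u r') / (a * cnj a) * (a + cnj a) = (if r = r' then 1 else (0::complex))" for r r'
    using a ca by (simp add: field_simps)
  have "(\<Sum>c\<in>R. ?P r c * cnj (?P r' c)) = (if r = r' then 1 else 0)" if "r \<in> R" "r' \<in> R" for r r'
  proof -
    have "(\<Sum>c\<in>R. ?P r c * cnj (?P r' c)) = (\<Sum>c\<in>R. (if c = r then (if r = r' then 1 else 0) else 0)
        - (if c = r then cnj (u r') * u r / cnj a else 0) - (if c = r' then u r * cnj (u r') / a else 0)
        + u r * cnj (u r') / (a * cnj a) * (u c * cnj (u c)))"
      by (intro sum.cong refl) (auto simp: field_simps a ca)
    also have "\<dots> = (if r = r' then 1 else 0) - cnj (u r') * u r / cnj a - u r * cnj (u r') / a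
        + u r * cnj (u r') / (a * cnj a) * (\<Sum>c\<in>R. u c * cnj (u c))"
      using assms(1) that by (simp add: sum.distrib sum_subtractf sum_distrib_left)
    finally show ?thesis using cancel u_norm' by simp
  qed
  moreover have "(\<Sum>x\<in>R. cnj (?P x r) * ?P x r') = (if r = r' then 1 else 0)" if "r \<in> R" "r' \<in> R" for r r'
  proof -
    have "(\<Sum>x\<in>R. cnj (?P x r) * ?P x r') = (\<Sum>x\<in>R. (if x = r then (if r = r' then 1 else 0) else 0)
        - (if x = r then u r * cnj (u r') / a else 0) - (if x = r' then cnj (u r') * u r / cnj a else 0)
        + u r * cnj (u r') / (a * cnj a) * (u x * cnj (u x)))"
      by (intro sum.cong refl) (auto simp: field_simps a ca)
    also have "\<dots> = (if r = r' then 1 else 0) - u r * cnj (u r') / a - cnj (u r') * u r / cnj a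
        + u r * cnj (u r') / (a * cnj a) * (\<Sum>c\<in>R. u c * cnj (u c))"
      using assms(1) that by (simp add: sum.distrib sum_subtractf sum_distrib_left)
    finally show ?thesis using cancel[of r r'] u_norm' by (simp add: algebra_simps)
  qed
  ultimately show ?thesis unfolding unitary_on_def by blast
qed

lemma unitary_on_reflection_exists:
  assumes fin: "finite R" and norm_eq: "cinner_on R s s = cinner_on R y y"
  shows "\<exists>P. unitary_on R R P \<and> (\<forall>r\<in>R. mat_vec_on R P s r = y r) \<and>
    (\<forall>w. cinner_on R w (\<lambda>r. s r - y r) = 0 \<longrightarrow> (\<forall>r\<in>R. mat_vec_on R P w r = w r))"
proof -
  define u where "u r = s r - y r" for r
  define a where "a = cinner_on R s u"
  have u_norm: "cinner_on R u u = a + cnj a"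
    using norm_eq
    by (simp add: u_def[abs_def] a_def cinner_on_diff_left cinner_on_diff_right cnj_cinner_on)
  show ?thesis
  proof (cases "a = 0")
    case True
    then have "\<forall>r\<in>R. s r = y r"
      using u_norm cinner_on_self_eq_0_iff[OF fin, of u] by (simp add: u_def)
    then show ?thesis
      using unitary_on_identity[OF fin] fin
      by (intro exI[of _ "\<lambda>r r'. if r = r' then 1 else 0"])
        (simp add: mat_vec_on_def if_distrib[of "\<lambda>t. t * _"] cong: if_cong)
  next
    case False
    define P where "P r r' = (if r = r' then 1 else 0) - u r * cnj (u r') / a" for r r'
    have P_apply: "mat_vec_on R P w r = w r - u r * cinner_on R w u / a" if "r \<in> R" for w r
    proof -
      have "mat_vec_on R P w r = (\<Sum>r'\<in>R. (if r = r' then w r' else 0) - u r / a * (w r' * cnj (u r')))"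
        unfolding mat_vec_on_def P_def by (intro sum.cong refl) (simp add: algebra_simps)
      also have "\<dots> = w r - u r * cinner_on R w u / a"
        using fin that by (simp add: sum_subtractf sum_distrib_left sum_divide_distrib cinner_on_def)
      finally show ?thesis .
    qed
    have "unitary_on R R P"
      unfolding P_def by (rule unitary_on_householder[OF fin False u_norm])
    moreover have "\<forall>r\<in>R. mat_vec_on R P s r = y r"
      using False by (simp add: P_apply flip: a_def) (simp add: u_def)
    moreover have "\<forall>r\<in>R. mat_vec_on R P w r = w r" if "cinner_on R w (\<lambda>r. s r - y r) = 0" for w
      using that by (simp add: P_apply u_def[abs_def])
    ultimately show ?thesis by blast
  qed
qed

lemma gram_eq_imp_unitary_on:
  fixes \<rho> \<sigma> :: "'z \<Rightarrow> 'a \<Rightarrow> complex"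
  assumes fin: "finite R" "finite C" "card R = card C" and "finite Z"
    and gram: "\<And>z z'. cinner_on R (\<rho> z) (\<rho> z') = cinner_on C (\<sigma> z) (\<sigma> z')"
  shows "\<exists>U. unitary_on R C U \<and> (\<forall>z\<in>Z. \<forall>r\<in>R. \<rho> z r = mat_vec_on C U (\<sigma> z) r)"
  using \<open>finite Z\<close>
proof (induction Z rule: finite_induct)
  case empty
  then show ?case using unitary_on_exists fin by blast
next
  case (insert z0 Z)
  then obtain U where U: "unitary_on R C U"
    and U_Z: "\<forall>z\<in>Z. \<forall>r\<in>R. \<rho> z r = mat_vec_on C U (\<sigma> z) r"
    by blast
  define s where "s = mat_vec_on C U (\<sigma> z0)"
  note U_isometry = unitary_on_cinner_on_mat_vec_on[OF U fin(1,2)]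
  have "cinner_on R s s = cinner_on R (\<rho> z0) (\<rho> z0)"
    by (simp add: s_def U_isometry gram)
  then obtain P where P: "unitary_on R R P" and P_s: "\<forall>r\<in>R. mat_vec_on R P s r = \<rho> z0 r"
    and P_fix: "\<And>w. cinner_on R w (\<lambda>r. s r - \<rho> z0 r) = 0 \<Longrightarrow> \<forall>r\<in>R. mat_vec_on R P w r = w r"
    using unitary_on_reflection_exists[OF fin(1)] by blast
  have "\<forall>r\<in>R. mat_vec_on R P (mat_vec_on C U (\<sigma> z)) r = \<rho> z r" if "z \<in> Z" for z
  proof -
    have "cinner_on R (mat_vec_on C U (\<sigma> z)) (\<rho> z0) = cinner_on R (\<rho> z) (\<rho> z0)"
      using U_Z that by (intro cinner_on_cong) auto
    then have "cinner_on R (mat_vec_on C U (\<sigma> z)) (\<lambda>r. s r - \<rho> z0 r) = 0"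
      by (simp add: cinner_on_diff_right s_def U_isometry gram)
    then show ?thesis using P_fix U_Z that by simp
  qed
  then have "\<forall>z\<in>insert z0 Z. \<forall>r\<in>R. \<rho> z r = mat_vec_on C (mat_mul_on R P U) (\<sigma> z) r"
    using P_s by (auto simp: mat_vec_on_mat_mul_on s_def)
  then show ?case using unitary_on_mat_mul_on[OF P U fin(1,2)] by blast
qed

lemma sandwich_sum_component:
  fixes F :: "'a \<Rightarrow> complex^'h::finite^'k::finite" and X :: "complex^'h^'h"
  shows "(\<Sum>r\<in>S. F r ** X ** adj (F r)) $ x $ y =
    (\<Sum>p\<in>UNIV. \<Sum>q\<in>UNIV. X $ p $ q * cinner_on S (\<lambda>r. F r $ x $ p) (\<lambda>r. F r $ y $ q))"
proof -
  have "(\<Sum>r\<in>S. F r ** X ** adj (F r)) $ x $ y =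
      (\<Sum>r\<in>S. \<Sum>q\<in>UNIV. \<Sum>p\<in>UNIV. X $ p $ q * (F r $ x $ p * cnj (F r $ y $ q)))"
    unfolding matrix_matrix_mult_def adj_def by (simp add: sum_distrib_right sum_distrib_left mult_ac)
  also have "\<dots> = (\<Sum>p\<in>UNIV. \<Sum>q\<in>UNIV. \<Sum>r\<in>S. X $ p $ q * (F r $ x $ p * cnj (F r $ y $ q)))"
    by (subst sum.swap) (subst sum.swap, intro sum.cong refl sum.swap)
  also have "\<dots> = (\<Sum>p\<in>UNIV. \<Sum>q\<in>UNIV. X $ p $ q * cinner_on S (\<lambda>r. F r $ x $ p) (\<lambda>r. F r $ y $ q))"
    by (simp add: cinner_on_def sum_distrib_left)
  finally show ?thesis .
qed

lemma sandwich_sums_eq_iff_gram: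
  fixes F G :: "'a \<Rightarrow> complex^'h::finite^'k::finite"
  shows "(\<forall>X. (\<Sum>r\<in>R. F r ** X ** adj (F r)) = (\<Sum>c\<in>C. G c ** X ** adj (G c))) \<longleftrightarrow>
    (\<forall>x p y q. cinner_on R (\<lambda>r. F r $ x $ p) (\<lambda>r. F r $ y $ q) =
               cinner_on C (\<lambda>c. G c $ x $ p) (\<lambda>c. G c $ y $ q))"
proof (intro iffI allI)
  fix x p y q
  assume sums_eq: "\<forall>X. (\<Sum>r\<in>R. F r ** X ** adj (F r)) = (\<Sum>c\<in>C. G c ** X ** adj (G c))"
  have pick: "(\<Sum>p'\<in>UNIV. \<Sum>q'\<in>UNIV. (if p' = p \<and> q' = q then 1 else 0) * f p' q') = f p q"
    for f :: "'h \<Rightarrow> 'h \<Rightarrow> complex"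
  proof -
    have "(if p' = p \<and> q' = q then 1 else 0) * f p' q' =
        (if q' = q then if p' = p then f p' q' else 0 else 0)" for p' q'
      by simp
    then show ?thesis by simp
  qed
  define E :: "complex^'h^'h" where "E = (\<chi> i j. if i = p \<and> j = q then 1 else 0)"
  have "(\<Sum>r\<in>R. F r ** E ** adj (F r)) $ x $ y = (\<Sum>c\<in>C. G c ** E ** adj (G c)) $ x $ y"
    using sums_eq by simp
  then show "cinner_on R (\<lambda>r. F r $ x $ p) (\<lambda>r. F r $ y $ q) =
      cinner_on C (\<lambda>c. G c $ x $ p) (\<lambda>c. G c $ y $ q)"
    by (simp only: sandwich_sum_component E_def vec_lambda_beta pick)
next
  fix X :: "complex^'h^'h"
  assume "\<forall>x p y q. cinner_on R (\<lambda>r. F r $ x $ p) (\<lambda>r. F r $ y $ q) =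
      cinner_on C (\<lambda>c. G c $ x $ p) (\<lambda>c. G c $ y $ q)"
  then show "(\<Sum>r\<in>R. F r ** X ** adj (F r)) = (\<Sum>c\<in>C. G c ** X ** adj (G c))"
    by (simp add: vec_eq_iff sandwich_sum_component del: sum_component)
qed

lemma kraus_unitary_freedom:
  fixes F G :: "'a \<Rightarrow> complex^'h::finite^'k::finite"
  assumes fin: "finite R" "finite C" "card R = card C"
  shows "(\<forall>X. (\<Sum>r\<in>R. F r ** X ** adj (F r)) = (\<Sum>c\<in>C. G c ** X ** adj (G c))) \<longleftrightarrow>
    (\<exists>U. unitary_on R C U \<and> (\<forall>r\<in>R. F r = (\<Sum>c\<in>C. cscale (U r c) (G c))))"
proof -
  define \<rho> where "\<rho> z r = F r $ fst z $ snd z" for z r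
  define \<sigma> where "\<sigma> z c = G c $ fst z $ snd z" for z c
  have expansion_iff: "(\<forall>r\<in>R. F r = (\<Sum>c\<in>C. cscale (U r c) (G c))) \<longleftrightarrow>
      (\<forall>z\<in>UNIV. \<forall>r\<in>R. \<rho> z r = mat_vec_on C U (\<sigma> z) r)" for U
    by (auto simp: vec_eq_iff \<rho>_def \<sigma>_def mat_vec_on_def cscale_def)
  have gram_iff: "(\<forall>X. (\<Sum>r\<in>R. F r ** X ** adj (F r)) = (\<Sum>c\<in>C. G c ** X ** adj (G c))) \<longleftrightarrow>
      (\<forall>z z'. cinner_on R (\<rho> z) (\<rho> z') = cinner_on C (\<sigma> z) (\<sigma> z'))"
    unfolding sandwich_sums_eq_iff_gram \<rho>_def \<sigma>_def by auto
  show ?thesis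
    unfolding gram_iff expansion_iff
  proof
    assume "\<forall>z z'. cinner_on R (\<rho> z) (\<rho> z') = cinner_on C (\<sigma> z) (\<sigma> z')"
    then show "\<exists>U. unitary_on R C U \<and> (\<forall>z\<in>UNIV. \<forall>r\<in>R. \<rho> z r = mat_vec_on C U (\<sigma> z) r)"
      using gram_eq_imp_unitary_on[OF fin finite_class.finite_UNIV] by blast
  next
    assume "\<exists>U. unitary_on R C U \<and> (\<forall>z\<in>UNIV. \<forall>r\<in>R. \<rho> z r = mat_vec_on C U (\<sigma> z) r)"
    then obtain U where U: "unitary_on R C U" and \<rho>_eq: "\<forall>z. \<forall>r\<in>R. \<rho> z r = mat_vec_on C U (\<sigma> z) r"
      by blast
    have "cinner_on R (\<rho> z) (\<rho> z') = cinner_on C (\<sigma> z) (\<sigma> z')" for z z'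
    proof -
      have "cinner_on R (\<rho> z) (\<rho> z') = cinner_on R (mat_vec_on C U (\<sigma> z)) (mat_vec_on C U (\<sigma> z'))"
        using \<rho>_eq by (intro cinner_on_cong) blast+
      then show ?thesis by (simp add: unitary_on_cinner_on_mat_vec_on[OF U fin(1,2)])
    qed
    then show "\<forall>z z'. cinner_on R (\<rho> z) (\<rho> z') = cinner_on C (\<sigma> z) (\<sigma> z')" by blast
  qed
qed

lemma sum_Un_piecewise:
  assumes "finite A" "finite B" "A \<inter> B = {}"
  shows "(\<Sum>x\<in>A \<union> B. h x (if x \<in> A then f x else g x)) = (\<Sum>x\<in>A. h x (f x)) + (\<Sum>x\<in>B. h x (g x))"
proof -
  have "(\<Sum>x\<in>A \<union> B. h x (if x \<in> A then f x else g x)) =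
      (\<Sum>x\<in>A. h x (if x \<in> A then f x else g x)) + (\<Sum>x\<in>B. h x (if x \<in> A then f x else g x))"
    by (rule sum.union_disjoint[OF assms])
  also have "\<dots> = (\<Sum>x\<in>A. h x (f x)) + (\<Sum>x\<in>B. h x (g x))"
    using assms(3) by (intro arg_cong2[where f = "(+)"] sum.cong) auto
  finally show ?thesis .
qed

lemma diff_eq_diff_iff: "(a::'a::ab_group_add) - b = c - d \<longleftrightarrow> a + d = c + b"
  by (simp add: diff_eq_eq diff_add_eq eq_diff_eq)

theorem mainTheorem11:
  fixes \<Psi> \<Xi> :: "complex^'h::finite^'h \<Rightarrow> complex^'k::finite^'k"
    and K J I L :: "'a set"
    and A B C D :: "'a \<Rightarrow> complex^'h^'k"
  assumes "complex_linear_map \<Psi>" "hermitian_preserving \<Psi>" "trace_preserving \<Psi>"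
    and "complex_linear_map \<Xi>" "hermitian_preserving \<Xi>" "trace_preserving \<Xi>"
    and "finite K" "finite J" "finite I" "finite L"
    and "K \<inter> J = {}" "K \<inter> I = {}" "K \<inter> L = {}" "J \<inter> I = {}" "J \<inter> L = {}" "I \<inter> L = {}"
    and "card K = card L" "card L = card I" "card I = card J"
    and "\<And>X. \<Psi> X = (\<Sum>k\<in>K. A k ** X ** adj (A k)) - (\<Sum>j\<in>J. B j ** X ** adj (B j))"
    and "\<And>X. \<Xi> X = (\<Sum>i\<in>I. C i ** X ** adj (C i)) - (\<Sum>l\<in>L. D l ** X ** adj (D l))"
  shows "\<Psi> = \<Xi> \<longleftrightarrow>
    (\<exists>U. unitary_on (K \<union> L) (I \<union> J) U \<and>
       (\<forall>k\<in>K. A k = (\<Sum>i\<in>I. cscale (U k i) (C i)) + (\<Sum>j\<in>J. cscale (U k j) (B j))) \<and>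
       (\<forall>l\<in>L. D l = (\<Sum>i\<in>I. cscale (U l i) (C i)) + (\<Sum>j\<in>J. cscale (U l j) (B j))))"
proof -
  note fin = assms(7-10) and disj = assms(11-16)
  have IJ: "I \<inter> J = {}" using disj(4) by blast
  define M where "M r = (if r \<in> K then A r else D r)" for r
  define N where "N c = (if c \<in> I then C c else B c)" for c
  have card_eq: "card (K \<union> L) = card (I \<union> J)"
    using fin disj assms(17-19) IJ by (simp add: card_Un_disjoint)
  have M_sum: "(\<Sum>r\<in>K \<union> L. M r ** X ** adj (M r)) =
      (\<Sum>k\<in>K. A k ** X ** adj (A k)) + (\<Sum>l\<in>L. D l ** X ** adj (D l))" for X
    unfolding M_def by (rule sum_Un_piecewise[where h = "\<lambda>_ F. F ** X ** adj F"]) (use fin disj in auto)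
  have N_sum: "(\<Sum>c\<in>I \<union> J. N c ** X ** adj (N c)) =
      (\<Sum>i\<in>I. C i ** X ** adj (C i)) + (\<Sum>j\<in>J. B j ** X ** adj (B j))" for X
    unfolding N_def by (rule sum_Un_piecewise[where h = "\<lambda>_ F. F ** X ** adj F"]) (use fin IJ in auto)
  have N_comb: "(\<Sum>c\<in>I \<union> J. cscale (U r c) (N c)) =
      (\<Sum>i\<in>I. cscale (U r i) (C i)) + (\<Sum>j\<in>J. cscale (U r j) (B j))"
    for U :: "'a \<Rightarrow> 'a \<Rightarrow> complex" and r
    unfolding N_def by (rule sum_Un_piecewise[where h = "\<lambda>c. cscale (U r c)"]) (use fin IJ in auto)
  have M_iff: "(\<forall>r\<in>K \<union> L. M r = E r) \<longleftrightarrow> (\<forall>k\<in>K. A k = E k) \<and> (\<forall>l\<in>L. D l = E l)" for E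
    using disj(3) by (auto simp: M_def)
  have "\<Psi> = \<Xi> \<longleftrightarrow> (\<forall>X. (\<Sum>r\<in>K \<union> L. M r ** X ** adj (M r)) = (\<Sum>c\<in>I \<union> J. N c ** X ** adj (N c)))"
    unfolding M_sum N_sum fun_eq_iff assms(20,21) diff_eq_diff_iff ..
  also have "\<dots> \<longleftrightarrow> (\<exists>U. unitary_on (K \<union> L) (I \<union> J) U \<and>
      (\<forall>r\<in>K \<union> L. M r = (\<Sum>c\<in>I \<union> J. cscale (U r c) (N c))))"
    using fin card_eq by (intro kraus_unitary_freedom) auto
  finally show ?thesis by (simp only: M_iff N_comb)
qed

end
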